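(* For $n\geqslant 5$ let $F_n$ be the tournament on $\{0,\ldots,n-1\}$ whose arcs are the pairs $(i,j)$ with $j\geqslant i+2$ together with the pairs $(i,i-1)$ for $1\leqslant i\leqslant n-1$. Then: (1) for every $n\geqslant 5$, $F_n$ is indecomposable; (2) for every $n\geqslant 6$, every vertex of $F_n$ other than $0$ and $n-1$ is critical, and $0$ and $n-1$ are not critical; (3) for every $n\geqslant 10$, $F_n$ has no strongly critical vertex.
   Context: A tournament $T=(V,A)$: finite vertex set, and for all distinct $x,y$ exactly one of $(x,y),(y,x)$ is an arc; write $x\to y$ for $(x,y)\in A$. For $X\subseteq V$, $T[X]$ is the induced subtournament and $T-x=T[V\setminus\{x\}]$. An interval of $T$ is $I\subseteq V$ such that for every $x\in V\setminus I$, either $x\to a$ for all $a\in I$ or $a\to x$ for all $a\in I$; trivial intervals are $\varnothing$, $V$, singletons; $T$ (with $\geqslant 3$ vertices) is indecomposable if all its intervals are trivial, decomposable otherwise. A vertex $x$ of an indecomposable tournament $T$ is critical if $T-x$ is decomposable. For an indecomposable tournament $T$ with at least $5$ vertices, a vertex $x$ is strongly critical if for every $X\subseteq V(T)$ with $x\in X$, $|X|\geqslant 5$ and $T[X]$ indecomposable, $x$ is a critical vertex of $T[X]$. *)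

theory Defs
  imports Main
begin

definition tournament :: "'a set \<Rightarrow> ('a \<times> 'a) set \<Rightarrow> bool" where
  "tournament V A \<longleftrightarrow> finite V \<and> A \<subseteq> V \<times> V \<and> (\<forall>x\<in>V. (x, x) \<notin> A) \<and>
     (\<forall>x\<in>V. \<forall>y\<in>V. x \<noteq> y \<longrightarrow> ((x, y) \<in> A \<longleftrightarrow> (y, x) \<notin> A))"

definition induced :: "('a \<times> 'a) set \<Rightarrow> 'a set \<Rightarrow> ('a \<times> 'a) set" where
  "induced A X = A \<inter> (X \<times> X)"

definition interval :: "'a set \<Rightarrow> ('a \<times> 'a) set \<Rightarrow> 'a set \<Rightarrow> bool" where
  "interval V A I \<longleftrightarrow> I \<subseteq> V \<and>
     (\<forall>x\<in>V - I. (\<forall>a\<in>I. (x, a) \<in> A) \<or> (\<forall>a\<in>I. (a, x) \<in> A))"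

definition trivial_interval :: "'a set \<Rightarrow> 'a set \<Rightarrow> bool" where
  "trivial_interval V I \<longleftrightarrow> I = {} \<or> I = V \<or> card I = 1"

definition indecomposable :: "'a set \<Rightarrow> ('a \<times> 'a) set \<Rightarrow> bool" where
  "indecomposable V A \<longleftrightarrow> card V \<ge> 3 \<and> (\<forall>I. interval V A I \<longrightarrow> trivial_interval V I)"

definition decomposable :: "'a set \<Rightarrow> ('a \<times> 'a) set \<Rightarrow> bool" where
  "decomposable V A \<longleftrightarrow> card V \<ge> 3 \<and> \<not> indecomposable V A"

definition critical :: "'a set \<Rightarrow> ('a \<times> 'a) set \<Rightarrow> 'a \<Rightarrow> bool" where
  "critical V A x \<longleftrightarrow> indecomposable V A \<and> x \<in> V \<and>
     decomposable (V - {x}) (induced A (V - {x}))"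

definition strongly_critical :: "'a set \<Rightarrow> ('a \<times> 'a) set \<Rightarrow> 'a \<Rightarrow> bool" where
  "strongly_critical V A x \<longleftrightarrow> indecomposable V A \<and> card V \<ge> 5 \<and> x \<in> V \<and>
     (\<forall>X. X \<subseteq> V \<and> x \<in> X \<and> card X \<ge> 5 \<and> indecomposable X (induced A X)
        \<longrightarrow> critical X (induced A X) x)"

definition F_verts :: "nat \<Rightarrow> nat set" where
  "F_verts n = {0..<n}"

definition F_arcs :: "nat \<Rightarrow> (nat \<times> nat) set" where
  "F_arcs n = {(i, j). i < n \<and> j < n \<and> (i + 2 \<le> j \<or> (1 \<le> i \<and> j = i - 1))}"

end

theory Submission
  imports Defs
begin

(* Every window {a..<b} of at least five consecutive vertices of F_n induces an indecomposable
   tournament: an interval I with two elements p < q absorbs p - 1 (which loses to p but beats q)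
   and q + 1, so it contains both ends of the window; a vertex outside I then relates in the same
   way to both ends, which forces it to be the second or the penultimate vertex, and each of these
   is separated from I by its neighbour on the inner side.
   Removing an inner vertex x of F_n leaves the intervals {0..<x} and {x+1..<n}, while removing an
   end leaves a window.  For n \<ge> 10 every vertex is an end of a six-vertex window, whose removal
   leaves a five-vertex window, so no vertex is strongly critical. *)

lemma F_arcs_iff: "(i, j) \<in> F_arcs n \<longleftrightarrow> i < n \<and> j < n \<and> (i + 2 \<le> j \<or> i = j + 1)"
  unfolding F_arcs_def by auto

lemma induced_iff: "(x, y) \<in> induced A X \<longleftrightarrow> (x, y) \<in> A \<and> x \<in> X \<and> y \<in> X"
  unfolding induced_def by auto

lemma induced_induced: "Y \<subseteq> X \<Longrightarrow> induced (induced A X) Y = induced A Y"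
  unfolding induced_def by auto

lemma interval_outside:
  "interval V A I \<Longrightarrow> x \<in> V - I \<Longrightarrow> (\<forall>y\<in>I. (x, y) \<in> A) \<or> (\<forall>y\<in>I. (y, x) \<in> A)"
  unfolding interval_def by blast

lemma decomposableI:
  assumes "interval V A I" and "2 \<le> card I" and "I \<noteq> V" and "3 \<le> card V"
  shows "decomposable V A"
  using assms unfolding decomposable_def indecomposable_def trivial_interval_def by force

lemma not_critical_if_indecomposable_removal:
  "indecomposable (V - {x}) (induced A (V - {x})) \<Longrightarrow> \<not> critical V A x"
  unfolding critical_def decomposable_def by blast

lemma strongly_critical_removal_decomposable:
  assumes "strongly_critical V A x" and "X \<subseteq> V" and "x \<in> X" and "5 \<le> card X"
    and "indecomposable X (induced A X)"
  shows "\<not> indecomposable (X - {x}) (induced A (X - {x}))"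
proof -
  have "critical X (induced A X) x"
    using assms unfolding strongly_critical_def by blast
  then show ?thesis
    unfolding critical_def decomposable_def by (simp add: induced_induced)
qed

lemma tournament_F: "tournament (F_verts n) (F_arcs n)"
  unfolding tournament_def F_verts_def by (auto simp: F_arcs_iff)

lemma induced_F_arcs_F_verts: "induced (F_arcs n) (F_verts n) = F_arcs n"
  unfolding induced_def F_verts_def F_arcs_def by auto

context
  fixes a b n :: nat and I :: "nat set"
  assumes window_le: "b \<le> n"
    and interval_I: "interval {a..<b} (induced (F_arcs n) {a..<b}) I"
begin

private abbreviation (input) "W \<equiv> {a..<b}"
private abbreviation (input) "A \<equiv> induced (F_arcs n) {a..<b}"

private lemma arc_iff: "(x, y) \<in> A \<longleftrightarrow> x \<in> W \<and> y \<in> W \<and> (x + 2 \<le> y \<or> x = y + 1)"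
  using window_le by (auto simp: induced_iff F_arcs_iff)

private lemma interval_subset: "I \<subseteq> W"
  using interval_I unfolding interval_def by blast

lemma F_window_interval_pred:
  assumes "p \<in> I" and "q \<in> I" and "p < q" and "a < p"
  shows "p - 1 \<in> I"
proof (rule ccontr)
  assume "p - 1 \<notin> I"
  then have "p - 1 \<in> W - I"
    using assms interval_subset by auto
  from interval_outside[OF interval_I this] show False
    using assms interval_subset by (auto simp: arc_iff)
qed

lemma F_window_interval_succ:
  assumes "p \<in> I" and "q \<in> I" and "p < q" and "q + 1 < b"
  shows "q + 1 \<in> I"
proof (rule ccontr)
  assume "q + 1 \<notin> I"
  then have "q + 1 \<in> W - I"
    using assms interval_subset by auto
  from interval_outside[OF interval_I this] show False
    using assms interval_subset by (auto simp: arc_iff)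
qed

lemma F_window_interval_ends:
  assumes "p \<in> I" and "q \<in> I" and "p < q"
  shows "a \<in> I" and "b - 1 \<in> I"
proof -
  have fin: "finite I"
    using interval_subset finite_subset by blast
  have "Min I \<in> I"
    using fin assms(1) Min_in by blast
  moreover have "Min I < q"
    using Min_le[OF fin assms(1)] assms(3) by linarith
  ultimately have "\<not> a < Min I"
    using F_window_interval_pred[of "Min I" q] Min_le[OF fin] assms(2) by fastforce
  moreover have "a \<le> Min I"
    using \<open>Min I \<in> I\<close> interval_subset by auto
  ultimately show "a \<in> I"
    using \<open>Min I \<in> I\<close> by (simp add: not_less)
  have "Max I \<in> I"
    using fin assms(1) Max_in by blast
  moreover have "p < Max I"
    using Max_ge[OF fin assms(2)] assms(3) by linarith
  ultimately have "\<not> Max I + 1 < b"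
    using F_window_interval_succ[of p "Max I"] Max_ge[OF fin] assms(1) by fastforce
  moreover have "Max I < b"
    using \<open>Max I \<in> I\<close> interval_subset by auto
  ultimately have "Max I = b - 1"
    by linarith
  with \<open>Max I \<in> I\<close> show "b - 1 \<in> I"
    by simp
qed

lemma F_window_interval_eq_window:
  assumes "a + 5 \<le> b" and "p \<in> I" and "q \<in> I" and "p < q"
  shows "I = W"
proof (rule ccontr)
  have ends: "a \<in> I" "b - 1 \<in> I"
    using F_window_interval_ends assms by auto
  have outside: "k = a + 1 \<or> k = b - 2" if "k \<in> W - I" for k
    using interval_outside[OF interval_I that] ends that by (auto simp: arc_iff)
  assume "I \<noteq> W"
  then obtain k where k: "k \<in> W - I"
    using interval_subset by blast
  then consider "k = a + 1" | "k = b - 2"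
    using outside by blast
  then show False
  proof cases
    case 1
    then have "a + 2 \<in> I"
      using outside[of "a + 2"] assms(1) by fastforce
    then show ?thesis
      using interval_outside[OF interval_I k] ends 1 assms(1) by (auto simp: arc_iff)
  next
    case 2
    then have "b - 3 \<in> I"
      using outside[of "b - 3"] assms(1) by fastforce
    then show ?thesis
      using interval_outside[OF interval_I k] ends 2 assms(1) by (auto simp: arc_iff)
  qed
qed

end

lemma indecomposable_F_window:
  assumes "a + 5 \<le> b" and "b \<le> n"
  shows "indecomposable {a..<b} (induced (F_arcs n) {a..<b})"
  unfolding indecomposable_def
proof (intro conjI allI impI)
  show "3 \<le> card {a..<b}"
    using assms by simp
next
  fix I
  assume interval: "interval {a..<b} (induced (F_arcs n) {a..<b}) I"
  show "trivial_interval {a..<b} I"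
  proof (rule ccontr)
    assume nontrivial: "\<not> trivial_interval {a..<b} I"
    have "finite I"
      using interval finite_subset unfolding interval_def by blast
    with nontrivial have "\<not> card I \<le> Suc 0"
      unfolding trivial_interval_def by (simp add: le_Suc_eq)
    then obtain p q where pq: "p \<in> I" "q \<in> I" "p < q"
      using \<open>finite I\<close> by (metis card_le_Suc0_iff_eq linorder_neq_iff)
    have "I = {a..<b}"
      by (rule F_window_interval_eq_window[OF assms(2) interval assms(1) pq])
    with nontrivial show False
      unfolding trivial_interval_def by blast
  qed
qed

lemma indecomposable_F: "5 \<le> n \<Longrightarrow> indecomposable (F_verts n) (F_arcs n)"
  using indecomposable_F_window[of 0 n n] induced_F_arcs_F_verts by (simp add: F_verts_def)

lemma F_interval_below_removed:
  "x < n \<Longrightarrow> interval (F_verts n - {x}) (induced (F_arcs n) (F_verts n - {x})) {0..<x}"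
  unfolding interval_def F_verts_def by (auto simp: induced_iff F_arcs_iff)

lemma F_interval_above_removed:
  "interval (F_verts n - {x}) (induced (F_arcs n) (F_verts n - {x})) {x + 1..<n}"
  unfolding interval_def F_verts_def by (auto simp: induced_iff F_arcs_iff)

lemma critical_F_inner:
  assumes "5 \<le> n" and "0 < x" and "x < n - 1"
  shows "critical (F_verts n) (F_arcs n) x"
proof -
  have card_removed: "3 \<le> card (F_verts n - {x})"
    using assms by (simp add: F_verts_def)
  have "decomposable (F_verts n - {x}) (induced (F_arcs n) (F_verts n - {x}))"
  proof (cases "x = 1")
    case True
    have card: "2 \<le> card {x + 1..<n}"
      using assms True by simp
    have "0 \<in> F_verts n - {x}" and "0 \<notin> {x + 1..<n}"
      using assms by (simp_all add: F_verts_def)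
    then have "{x + 1..<n} \<noteq> F_verts n - {x}"
      by blast
    with card show ?thesis
      by (rule decomposableI[OF F_interval_above_removed _ _ card_removed])
  next
    case False
    have card: "2 \<le> card {0..<x}"
      using assms False by simp
    have "n - 1 \<in> F_verts n - {x}" and "n - 1 \<notin> {0..<x}"
      using assms by (simp_all add: F_verts_def)
    then have "{0..<x} \<noteq> F_verts n - {x}"
      by blast
    with card show ?thesis
      using decomposableI[OF F_interval_below_removed _ _ card_removed] assms by simp
  qed
  then show ?thesis
    using assms indecomposable_F unfolding critical_def F_verts_def by auto
qed

lemma not_critical_F_first: "6 \<le> n \<Longrightarrow> \<not> critical (F_verts n) (F_arcs n) 0"
proof (rule not_critical_if_indecomposable_removal)
  assume "6 \<le> n"
  moreover have "F_verts n - {0} = {1..<n}"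
    unfolding F_verts_def by auto
  ultimately show "indecomposable (F_verts n - {0}) (induced (F_arcs n) (F_verts n - {0}))"
    using indecomposable_F_window[of 1 n n] by simp
qed

lemma not_critical_F_last: "6 \<le> n \<Longrightarrow> \<not> critical (F_verts n) (F_arcs n) (n - 1)"
proof (rule not_critical_if_indecomposable_removal)
  assume "6 \<le> n"
  moreover have "F_verts n - {n - 1} = {0..<n - 1}"
    unfolding F_verts_def by auto
  ultimately show "indecomposable (F_verts n - {n - 1}) (induced (F_arcs n) (F_verts n - {n - 1}))"
    using indecomposable_F_window[of 0 "n - 1" n] by simp
qed

lemma not_strongly_critical_F_window_end:
  assumes "a + 6 \<le> n" and "x = a \<or> x = a + 5"
  shows "\<not> strongly_critical (F_verts n) (F_arcs n) x"
proof
  let ?X = "{a..<a + 6}"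
  assume "strongly_critical (F_verts n) (F_arcs n) x"
  moreover have "?X \<subseteq> F_verts n" and "x \<in> ?X" and "5 \<le> card ?X"
    using assms by (auto simp: F_verts_def)
  moreover have "indecomposable ?X (induced (F_arcs n) ?X)"
    using indecomposable_F_window assms(1) by simp
  ultimately have "\<not> indecomposable (?X - {x}) (induced (F_arcs n) (?X - {x}))"
    by (rule strongly_critical_removal_decomposable)
  moreover have "?X - {x} = {a + 1..<a + 6} \<or> ?X - {x} = {a..<a + 5}"
    using assms(2) by auto
  moreover have "indecomposable {a + 1..<a + 6} (induced (F_arcs n) {a + 1..<a + 6})"
    and "indecomposable {a..<a + 5} (induced (F_arcs n) {a..<a + 5})"
    using indecomposable_F_window assms(1) by simp_all
  ultimately show False
    by metis
qed

lemma not_strongly_critical_F: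
  assumes "10 \<le> n"
  shows "\<not> strongly_critical (F_verts n) (F_arcs n) x"
proof (cases "x < n")
  case False
  then show ?thesis
    by (simp add: strongly_critical_def F_verts_def)
next
  case True
  show ?thesis
  proof (cases "5 \<le> x")
    case True
    then show ?thesis
      using not_strongly_critical_F_window_end[of "x - 5" n x] \<open>x < n\<close> by simp
  next
    case False
    then show ?thesis
      using not_strongly_critical_F_window_end[of x n x] assms by simp
  qed
qed

theorem mainTheorem5:
  shows "(\<forall>n\<ge>5. tournament (F_verts n) (F_arcs n) \<and> indecomposable (F_verts n) (F_arcs n))
       \<and> (\<forall>n\<ge>6. (\<forall>x\<in>F_verts n. x \<noteq> 0 \<and> x \<noteq> n - 1 \<longrightarrow> critical (F_verts n) (F_arcs n) x)
                 \<and> \<not> critical (F_verts n) (F_arcs n) 0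
                 \<and> \<not> critical (F_verts n) (F_arcs n) (n - 1))
       \<and> (\<forall>n\<ge>10. \<not> (\<exists>x. strongly_critical (F_verts n) (F_arcs n) x))"
proof (intro conjI allI impI ballI)
  fix n :: nat
  show "tournament (F_verts n) (F_arcs n)"
    by (rule tournament_F)
  show "5 \<le> n \<Longrightarrow> indecomposable (F_verts n) (F_arcs n)"
    by (rule indecomposable_F)
  show "critical (F_verts n) (F_arcs n) x"
    if "6 \<le> n" and "x \<in> F_verts n" and "x \<noteq> 0 \<and> x \<noteq> n - 1" for x
    using critical_F_inner[of n x] that by (auto simp: F_verts_def)
  show "6 \<le> n \<Longrightarrow> \<not> critical (F_verts n) (F_arcs n) 0"
    by (rule not_critical_F_first)
  show "6 \<le> n \<Longrightarrow> \<not> critical (F_verts n) (F_arcs n) (n - 1)"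
    by (rule not_critical_F_last)
  show "10 \<le> n \<Longrightarrow> \<not> (\<exists>x. strongly_critical (F_verts n) (F_arcs n) x)"
    using not_strongly_critical_F by blast
qed

end
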